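(* Let $d=(d_1,\ldots,d_n)$ be a degree sequence with $n\ge 3$, and let $m=\frac12\sum_i d_i$. There is a bridge-less cactus realization of $d$ if and only if $m\le\lfloor 1.5(n-1)\rfloor$ and $d_i$ is even for every $i$.
   Context: A degree sequence is a sequence $d=(d_1,\ldots,d_n)$ of integers with $d_i\in\{1,\ldots,n-1\}$, even sum, and $d_1\ge\cdots\ge d_n$. A realization of $d$ is a simple graph on $\{1,\ldots,n\}$ in which vertex $i$ has degree $d_i$. A cactus is a connected simple graph in which every edge lies on at most one cycle; it is bridge-less if no edge's removal disconnects it. *)

theory Defs
  imports Complex_Main
begin

definition degree_sequence :: "nat \<Rightarrow> (nat \<Rightarrow> nat) \<Rightarrow> bool" where
  "degree_sequence n d \<longleftrightarrow>
     (\<forall>i\<in>{1..n}. 1 \<le> d i \<and> d i \<le> n - 1) \<and>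
     even (\<Sum>i=1..n. d i) \<and>
     (\<forall>i\<in>{1..n}. \<forall>j\<in>{1..n}. i \<le> j \<longrightarrow> d j \<le> d i)"

definition simple_graph :: "'a set \<Rightarrow> 'a set set \<Rightarrow> bool" where
  "simple_graph V E \<longleftrightarrow> finite V \<and> (\<forall>e\<in>E. e \<subseteq> V \<and> card e = 2)"

definition degree :: "'a set set \<Rightarrow> 'a \<Rightarrow> nat" where
  "degree E v = card {e\<in>E. v \<in> e}"

definition adj :: "'a set set \<Rightarrow> 'a \<Rightarrow> 'a \<Rightarrow> bool" where
  "adj E u v \<longleftrightarrow> {u, v} \<in> E"

definition connected_graph :: "'a set \<Rightarrow> 'a set set \<Rightarrow> bool" where
  "connected_graph V E \<longleftrightarrow> (\<forall>u\<in>V. \<forall>v\<in>V. (adj E)\<^sup>*\<^sup>* u v)"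

text \<open>A cycle of the graph, identified with its edge set: distinct vertices
  v_0,...,v_(k-1), k >= 3, consecutive (cyclically) ones adjacent.\<close>
definition is_cycle :: "'a set set \<Rightarrow> 'a set set \<Rightarrow> bool" where
  "is_cycle E C \<longleftrightarrow> C \<subseteq> E \<and> (\<exists>vs. distinct vs \<and> length vs \<ge> 3 \<and>
      C = {{vs ! i, vs ! ((i + 1) mod length vs)} | i. i < length vs})"

definition cactus :: "'a set \<Rightarrow> 'a set set \<Rightarrow> bool" where
  "cactus V E \<longleftrightarrow> simple_graph V E \<and> connected_graph V E \<and>
     (\<forall>e\<in>E. \<forall>C1 C2. is_cycle E C1 \<and> is_cycle E C2 \<and> e \<in> C1 \<and> e \<in> C2 \<longrightarrow> C1 = C2)"

definition bridgeless :: "'a set \<Rightarrow> 'a set set \<Rightarrow> bool" where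
  "bridgeless V E \<longleftrightarrow> (\<forall>e\<in>E. connected_graph V (E - {e}))"

definition realization :: "nat \<Rightarrow> (nat \<Rightarrow> nat) \<Rightarrow> nat set set \<Rightarrow> bool" where
  "realization n d E \<longleftrightarrow> simple_graph {1..n} E \<and> (\<forall>i\<in>{1..n}. degree E i = d i)"

end

theory Submission
  imports Defs "HOL-Library.Transitive_Closure_Table"
begin

(*
  Call an edge a bridge if it lies on no cycle.  In a graph whose cycles are pairwise
  edge-disjoint, 2 |E| + #bridges + 3 #components <= 3 |V| and every vertex has an even
  number of incident edges plus incident bridges.  Both invariants survive adding an edge:
  a new edge either is a bridge joining two components, or closes a unique cycle whose
  at least two other edges stop being bridges.  A bridgeless connected cactus has no
  bridges and one component, hence 2m + 3 <= 3n and all degrees are even.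

  Conversely, let all d_i be even and at least 2 with sum at most 3(n - 1).  If all
  d_i = 2, a Hamiltonian cycle realizes d.  Otherwise counting shows that at least two
  vertices a, b have degree 2; realize the degrees obtained by deleting a, b and
  lowering some d_h >= 4 by 2, and glue the triangle h a b onto it.
*)

section \<open>Reachability, components and degrees\<close>

abbreviation reach :: "'a set set \<Rightarrow> 'a \<Rightarrow> 'a \<Rightarrow> bool" where
  "reach E \<equiv> (adj E)\<^sup>*\<^sup>*"

lemma adj_commute: "adj E u v \<longleftrightarrow> adj E v u"
  unfolding adj_def by (simp add: insert_commute)

lemma reach_sym: "reach E u v \<Longrightarrow> reach E v u"
  using symp_rtranclp[of "adj E"] adj_commute by (metis sympD sympI)

lemma reach_mono: "reach E u v \<Longrightarrow> E \<subseteq> F \<Longrightarrow> reach F u v"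
  unfolding adj_def by (erule rtranclp_mono[THEN predicate2D, rotated]) auto

lemma connected_graphI:
  assumes "\<And>v. v \<in> V \<Longrightarrow> reach E r v"
  shows "connected_graph V E"
  unfolding connected_graph_def by (metis assms reach_sym rtranclp_trans)

definition component :: "'a set \<Rightarrow> 'a set set \<Rightarrow> 'a \<Rightarrow> 'a set" where
  "component V E v = {w \<in> V. reach E v w}"

definition num_components :: "'a set \<Rightarrow> 'a set set \<Rightarrow> nat" where
  "num_components V E = card (component V E ` V)"

lemma num_components_le_card: "finite V \<Longrightarrow> num_components V E \<le> card V"
  unfolding num_components_def by (rule card_image_le)

lemma num_components_connected:
  assumes "V \<noteq> {}" "connected_graph V E"
  shows "num_components V E = 1"
proof -
  have "component V E ` V = {V}"
    using assms unfolding connected_graph_def component_def by auto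
  then show ?thesis
    unfolding num_components_def by simp
qed

lemma component_supergraph:
  assumes "E \<subseteq> F" "v \<in> V"
  shows "component V F v = {w \<in> V. \<exists>x \<in> component V E v. reach F x w}"
  unfolding component_def using reach_mono[OF _ assms(1)] assms(2)
  by (auto intro: rtranclp_trans)

lemma component_image_supergraph:
  assumes "E \<subseteq> F"
  shows "component V F ` V = (\<lambda>S. {w \<in> V. \<exists>x\<in>S. reach F x w}) ` component V E ` V"
  unfolding image_image using component_supergraph[OF assms] by (rule image_cong[OF refl])

lemma num_components_antimono:
  assumes "finite V" "E \<subseteq> F"
  shows "num_components V F \<le> num_components V E"
  unfolding num_components_def component_image_supergraph[OF assms(2)]
  using assms(1) by (intro card_image_le) simp

lemma component_eq: "reach E u v \<Longrightarrow> component V E u = component V E v"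
  unfolding component_def by (meson reach_sym rtranclp_trans)

lemma num_components_strict_antimono:
  assumes "finite V" "E \<subseteq> F" "u \<in> V" "v \<in> V" "reach F u v" "\<not> reach E u v"
  shows "num_components V F < num_components V E"
proof -
  let ?merge = "\<lambda>S. {w \<in> V. \<exists>x\<in>S. reach F x w}"
  have "?merge (component V E u) = component V F u"
    using component_supergraph[OF assms(2,3)] by simp
  also have "\<dots> = component V F v"
    by (rule component_eq[OF assms(5)])
  also have "\<dots> = ?merge (component V E v)"
    using component_supergraph[OF assms(2,4)] by simp
  finally have "?merge (component V E u) = ?merge (component V E v)" .
  moreover have "component V E u \<noteq> component V E v"
  proof -
    have "v \<in> component V E v" "v \<notin> component V E u"
      using assms(4,6) unfolding component_def by auto
    then show ?thesis by blast
  qed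
  ultimately have "\<not> inj_on ?merge (component V E ` V)"
    using assms(3,4) by (auto dest: inj_onD)
  then have "card (?merge ` component V E ` V) \<noteq> card (component V E ` V)"
    using assms(1) inj_on_iff_eq_card by blast
  moreover have "card (?merge ` component V E ` V) \<le> card (component V E ` V)"
    by (rule card_image_le) (use assms(1) in simp)
  ultimately show ?thesis
    unfolding num_components_def component_image_supergraph[OF assms(2)] by linarith
qed

lemma simple_graph_finite_edges: "simple_graph V E \<Longrightarrow> finite E"
  unfolding simple_graph_def using finite_subset[of E "Pow V"] by blast

lemma degree_insert:
  assumes "finite E" "e \<notin> E"
  shows "degree (insert e E) w = degree E w + (if w \<in> e then 1 else 0)"
proof (cases "w \<in> e")
  case True
  then have "{x \<in> insert e E. w \<in> x} = insert e {x \<in> E. w \<in> x}"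
    by blast
  then show ?thesis
    unfolding degree_def using assms True by simp
next
  case False
  then have "{x \<in> insert e E. w \<in> x} = {x \<in> E. w \<in> x}"
    by blast
  then show ?thesis
    unfolding degree_def using False by simp
qed

lemma degree_Un:
  assumes "finite A" "finite B" "A \<inter> B = {}"
  shows "degree (A \<union> B) w = degree A w + degree B w"
proof -
  have "{e \<in> A \<union> B. w \<in> e} = {e \<in> A. w \<in> e} \<union> {e \<in> B. w \<in> e}"
    by blast
  then show ?thesis
    unfolding degree_def using assms by (simp add: card_Un_disjoint disjoint_iff)
qed

lemma sum_degree:
  assumes "simple_graph V E"
  shows "(\<Sum>v\<in>V. degree E v) = 2 * card E"
proof -
  have V: "finite V" and E: "\<And>e. e \<in> E \<Longrightarrow> e \<subseteq> V \<and> card e = 2"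
    using assms unfolding simple_graph_def by auto
  have "finite E"
    using assms by (rule simple_graph_finite_edges)
  have "(\<Sum>v\<in>V. degree E v) = (\<Sum>v\<in>V. \<Sum>e\<in>E. if v \<in> e then 1 else 0)"
    unfolding degree_def using sum.inter_filter[OF \<open>finite E\<close>, of "\<lambda>_. 1::nat"] by simp
  also have "\<dots> = (\<Sum>e\<in>E. \<Sum>v\<in>V. if v \<in> e then 1 else 0)"
    by (rule sum.swap)
  also have "\<dots> = (\<Sum>e\<in>E. card e)"
    using V E by (intro sum.cong) (simp_all add: sum.If_cases Int_absorb1)
  also have "\<dots> = 2 * card E"
    using E by simp
  finally show ?thesis .
qed

lemma degree_outside:
  assumes "simple_graph V E" "v \<notin> V"
  shows "degree E v = 0"
proof -
  have "{e \<in> E. v \<in> e} = {}"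
    using assms unfolding simple_graph_def by blast
  then show ?thesis
    unfolding degree_def by (simp only: card.empty)
qed

section \<open>Cycles\<close>

lemma mod_Suc_Suc_neq:
  fixes i L :: nat assumes "i < L" "3 \<le> L" shows "Suc (Suc i mod L) mod L \<noteq> i"
proof -
  consider "Suc (Suc i) < L" | "Suc (Suc i) = L" | "Suc i = L" using assms by linarith
  then show ?thesis using assms by cases (auto simp: mod_if)
qed

lemma Suc_mod_eq_iff:
  fixes i j L :: nat assumes "i < L" "j < L"
  shows "Suc i mod L = j \<longleftrightarrow> i = (j + L - 1) mod L"
proof (cases j)
  case 0
  then show ?thesis using assms by (auto simp: mod_if)
next
  case (Suc k)
  then have "(j + L - 1) mod L = k" using assms by (simp add: mod_if)
  then show ?thesis using assms Suc by (auto simp: mod_if)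
qed

definition cycle_edge :: "'a list \<Rightarrow> nat \<Rightarrow> 'a set" where
  "cycle_edge vs i = {vs ! i, vs ! (Suc i mod length vs)}"

definition cycle_edges :: "'a list \<Rightarrow> 'a set set" where
  "cycle_edges vs = cycle_edge vs ` {..<length vs}"

lemma is_cycle_iff:
  "is_cycle E C \<longleftrightarrow> C \<subseteq> E \<and> (\<exists>vs. distinct vs \<and> 3 \<le> length vs \<and> C = cycle_edges vs)"
  unfolding is_cycle_def cycle_edges_def cycle_edge_def by (auto simp: image_def)

lemma is_cycle_subset: "is_cycle E C \<Longrightarrow> C \<subseteq> E"
  unfolding is_cycle_def by blast

lemma is_cycle_transfer: "is_cycle E C \<Longrightarrow> C \<subseteq> F \<Longrightarrow> is_cycle F C"
  unfolding is_cycle_iff by blast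

lemma is_cycle_mono: "is_cycle E C \<Longrightarrow> E \<subseteq> F \<Longrightarrow> is_cycle F C"
  by (meson is_cycle_subset is_cycle_transfer order_trans)

locale vertex_cycle =
  fixes vs :: "'a list"
  assumes distinct: "distinct vs" and long: "3 \<le> length vs"
begin

abbreviation "L \<equiv> length vs"

lemma Suc_mod_less: "Suc i mod L < L"
  using long by (intro mod_less_divisor) linarith

lemma nth_eq_iff: "i < L \<Longrightarrow> j < L \<Longrightarrow> vs ! i = vs ! j \<longleftrightarrow> i = j"
  using distinct by (simp add: nth_eq_iff_index_eq)

lemma cycle_edge_inj:
  assumes "i < L" "j < L" "cycle_edge vs i = cycle_edge vs j"
  shows "i = j"
proof (rule ccontr)
  assume "i \<noteq> j"
  then have "i = Suc j mod L" "j = Suc i mod L"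
    using assms unfolding cycle_edge_def by (auto simp: doubleton_eq_iff nth_eq_iff Suc_mod_less)
  then show False
    using mod_Suc_Suc_neq[OF assms(1) long] by simp
qed

lemma card_cycle_edges: "card (cycle_edges vs) = L"
  unfolding cycle_edges_def using cycle_edge_inj by (simp add: card_image inj_on_def)

lemma card_cycle_edge:
  assumes "i < L"
  shows "card (cycle_edge vs i) = 2"
proof -
  have "Suc i mod L \<noteq> i"
    using assms long by (cases "Suc i = L") auto
  then show ?thesis
    using assms nth_eq_iff Suc_mod_less unfolding cycle_edge_def by simp
qed

lemma cycle_edges_subset: "e \<in> cycle_edges vs \<Longrightarrow> e \<subseteq> set vs"
  unfolding cycle_edges_def cycle_edge_def using Suc_mod_less by auto

lemma degree_cycle_edges: "degree (cycle_edges vs) w = (if w \<in> set vs then 2 else 0)"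
proof -
  have "{e \<in> cycle_edges vs. w \<in> e} = cycle_edge vs ` {i. i < L \<and> w \<in> cycle_edge vs i}"
    unfolding cycle_edges_def by auto
  then have deg: "degree (cycle_edges vs) w = card {i. i < L \<and> w \<in> cycle_edge vs i}"
    unfolding degree_def using cycle_edge_inj by (simp add: card_image inj_on_def)
  show ?thesis
  proof (cases "w \<in> set vs")
    case True
    then obtain j where j: "j < L" "w = vs ! j"
      by (auto simp: in_set_conv_nth)
    define p where "p = (j + L - 1) mod L"
    have "p < L"
      unfolding p_def using long by (intro mod_less_divisor) linarith
    then have p: "p < L" "Suc p mod L = j"
      using j Suc_mod_eq_iff[of p L j] unfolding p_def by auto
    have "{i. i < L \<and> w \<in> cycle_edge vs i} = {j, p}"
      using j p Suc_mod_eq_iff[of _ L j, folded p_def]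
      by (auto simp: cycle_edge_def nth_eq_iff Suc_mod_less)
    moreover have "j \<noteq> p"
      using long p by (auto simp: mod_if split: if_splits)
    ultimately show ?thesis using deg True by simp
  next
    case False
    then show ?thesis using deg cycle_edges_subset unfolding cycle_edges_def by auto
  qed
qed

lemma successor_closed_eq:
  assumes "D \<subseteq> cycle_edges vs" "D \<noteq> {}"
    and closed: "\<And>i. cycle_edge vs i \<in> D \<Longrightarrow> cycle_edge vs (Suc i mod L) \<in> D"
  shows "D = cycle_edges vs"
proof -
  obtain i0 where i0: "i0 < L" "cycle_edge vs i0 \<in> D"
    using assms(1,2) unfolding cycle_edges_def by blast
  have walk: "cycle_edge vs ((i0 + k) mod L) \<in> D" for k
  proof (induction k)
    case 0
    then show ?case using i0 by simp
  next
    case (Suc k)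
    from closed[OF Suc.IH] show ?case by (simp add: mod_Suc_eq)
  qed
  have "cycle_edge vs i \<in> D" if "i < L" for i
  proof -
    have "(i0 + (i + L - i0)) mod L = i"
      using that i0(1) by simp
    then show ?thesis
      using walk[of "i + L - i0"] by simp
  qed
  then show ?thesis
    using assms(1) unfolding cycle_edges_def by blast
qed

lemma reach_around_cycle:
  assumes "j < L" "k < L"
  shows "reach (cycle_edges vs - {cycle_edge vs j}) (vs ! (Suc j mod L)) (vs ! ((Suc j + k) mod L))"
  using assms(2)
proof (induction k)
  case 0
  show ?case by simp
next
  case (Suc k)
  define i where "i = (Suc j + k) mod L"
  have "i < L"
    using Suc_mod_less[of "j + k"] unfolding i_def by simp
  have "i \<noteq> j"
  proof (cases "Suc j + k < L")
    case True
    then show ?thesis unfolding i_def by simp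
  next
    case False
    then have "i = Suc j + k - L"
      unfolding i_def using assms(1) Suc.prems by (simp add: le_mod_geq)
    then show ?thesis using Suc.prems False by linarith
  qed
  then have "cycle_edge vs i \<in> cycle_edges vs - {cycle_edge vs j}"
    using \<open>i < L\<close> assms(1) cycle_edge_inj unfolding cycle_edges_def by blast
  moreover have "Suc i mod L = (Suc j + Suc k) mod L"
    unfolding i_def by (simp add: mod_Suc_eq)
  ultimately have "adj (cycle_edges vs - {cycle_edge vs j}) (vs ! i) (vs ! ((Suc j + Suc k) mod L))"
    unfolding adj_def cycle_edge_def by simp
  moreover have "reach (cycle_edges vs - {cycle_edge vs j}) (vs ! (Suc j mod L)) (vs ! i)"
    using Suc unfolding i_def by simp
  ultimately show ?case
    by (rule rtranclp.rtrancl_into_rtrancl[rotated])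
qed

lemma reach_cycle_edges_Diff:
  assumes "j < L" "w \<in> set vs"
  shows "reach (cycle_edges vs - {cycle_edge vs j}) (vs ! (Suc j mod L)) w"
proof -
  obtain i where i: "i < L" "w = vs ! i"
    using assms(2) by (auto simp: in_set_conv_nth)
  define k where "k = (i + L - Suc j) mod L"
  have "k < L"
    unfolding k_def using long by (intro mod_less_divisor) linarith
  have k: "(Suc j + k) mod L = i"
  proof -
    have "(Suc j + k) mod L = (Suc j + (i + L - Suc j)) mod L"
      unfolding k_def by (rule mod_add_right_eq)
    also have "Suc j + (i + L - Suc j) = i + L"
      using assms(1) by linarith
    finally show ?thesis
      using i by simp
  qed
  show ?thesis
    using reach_around_cycle[OF assms(1) \<open>k < L\<close>] unfolding k i(2) .
qed

lemma connected_cycle_edges: "connected_graph (set vs) (cycle_edges vs)"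
proof (rule connected_graphI)
  fix v assume "v \<in> set vs"
  moreover have "0 < L"
    using long by linarith
  ultimately have "reach (cycle_edges vs - {cycle_edge vs 0}) (vs ! (Suc 0 mod L)) v"
    by (rule reach_cycle_edges_Diff[rotated])
  then show "reach (cycle_edges vs) (vs ! (Suc 0 mod L)) v"
    by (rule reach_mono) blast
qed

end

lemma is_cycleE:
  assumes "is_cycle E C"
  obtains vs where "vertex_cycle vs" "C = cycle_edges vs"
proof -
  obtain vs where "distinct vs" "3 \<le> length vs" "C = cycle_edges vs"
    using assms unfolding is_cycle_iff by blast
  then show thesis
    using that vertex_cycle.intro by blast
qed

lemma is_cycle_card:
  assumes "is_cycle E C"
  shows "finite C" "3 \<le> card C"
proof -
  obtain vs where vs: "vertex_cycle vs" "C = cycle_edges vs"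
    using assms by (rule is_cycleE)
  interpret vertex_cycle vs by (rule vs(1))
  show "finite C" "3 \<le> card C"
    using vs(2) card_cycle_edges long unfolding cycle_edges_def by simp_all
qed

lemma degree_cycle:
  assumes "is_cycle E C"
  shows "degree C w = (if w \<in> \<Union>C then 2 else 0)"
proof -
  obtain vs where vs: "vertex_cycle vs" "C = cycle_edges vs"
    using assms by (rule is_cycleE)
  interpret vertex_cycle vs by (rule vs(1))
  have "w \<in> \<Union>C \<longleftrightarrow> w \<in> set vs"
  proof
    assume "w \<in> \<Union>C"
    then show "w \<in> set vs" using vs(2) cycle_edges_subset by blast
  next
    assume "w \<in> set vs"
    then obtain j where "j < L" "w = vs ! j"
      by (auto simp: in_set_conv_nth)
    then show "w \<in> \<Union>C"
      using vs(2) unfolding cycle_edges_def cycle_edge_def by blast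
  qed
  then show ?thesis
    using vs(2) degree_cycle_edges by simp
qed

lemma incident_edges_cycle_eq:
  assumes C: "is_cycle E C" "w \<in> e" "e \<in> C" and "finite E" "degree E w \<le> 2"
  shows "{x \<in> C. w \<in> x} = {x \<in> E. w \<in> x}"
proof (rule card_subset_eq)
  show "finite {x \<in> E. w \<in> x}"
    using \<open>finite E\<close> by simp
  show "{x \<in> C. w \<in> x} \<subseteq> {x \<in> E. w \<in> x}"
    using is_cycle_subset[OF C(1)] by blast
  have "card {x \<in> C. w \<in> x} = 2"
    using degree_cycle[OF C(1), of w] C(2,3) unfolding degree_def by auto
  then show "card {x \<in> C. w \<in> x} = card {x \<in> E. w \<in> x}"
    using card_mono[OF \<open>finite {x \<in> E. w \<in> x}\<close> \<open>{x \<in> C. w \<in> x} \<subseteq> _\<close>] assms(5)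
    unfolding degree_def by linarith
qed

lemma cycle_subset_cycle_eq:
  assumes D: "is_cycle E D" and C: "is_cycle E C" and "D \<subseteq> C"
  shows "D = C"
proof -
  obtain vs where vs: "vertex_cycle vs" "C = cycle_edges vs"
    using C by (rule is_cycleE)
  interpret vertex_cycle vs by (rule vs(1))
  have DC: "is_cycle C D"
    using D \<open>D \<subseteq> C\<close> by (rule is_cycle_transfer)
  have "finite C" "degree C w \<le> 2" for w
    using is_cycle_card(1)[OF C] degree_cycle[OF C, of w] by simp_all
  have "cycle_edge vs (Suc i mod L) \<in> D" if "cycle_edge vs i \<in> D" for i
  proof -
    \<comment> \<open>both edges of \<open>C\<close> at their common vertex lie in \<open>D\<close>, as that vertex has degree 2\<close>
    let ?w = "vs ! (Suc i mod L)"
    have "?w \<in> cycle_edge vs i" "?w \<in> cycle_edge vs (Suc i mod L)"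
      unfolding cycle_edge_def by simp_all
    moreover have "cycle_edge vs (Suc i mod L) \<in> C"
      using vs(2) Suc_mod_less unfolding cycle_edges_def by blast
    moreover have "{x \<in> D. ?w \<in> x} = {x \<in> C. ?w \<in> x}"
      using \<open>?w \<in> cycle_edge vs i\<close> that \<open>finite C\<close> \<open>degree C ?w \<le> 2\<close>
      by (rule incident_edges_cycle_eq[OF DC])
    ultimately show ?thesis
      by blast
  qed
  moreover have "D \<noteq> {}"
    using is_cycle_card(2)[OF D] by auto
  ultimately show ?thesis
    using successor_closed_eq \<open>D \<subseteq> C\<close> vs(2) by blast
qed

lemma cycle_edge_endpoints_reach:
  assumes "is_cycle E C" "e \<in> C"
  obtains u v where "e = {u, v}" "reach (C - {e}) u v"
proof -
  obtain vs where vs: "vertex_cycle vs" "C = cycle_edges vs"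
    using assms(1) by (rule is_cycleE)
  interpret vertex_cycle vs by (rule vs(1))
  obtain j where j: "j < L" "e = cycle_edge vs j"
    using assms(2) vs(2) unfolding cycle_edges_def by blast
  have "reach (C - {e}) (vs ! (Suc j mod L)) (vs ! j)"
    using reach_cycle_edges_Diff[OF j(1)] j vs(2) by simp
  moreover have "e = {vs ! (Suc j mod L), vs ! j}"
    using j(2) unfolding cycle_edge_def by auto
  ultimately show ?thesis
    using that by blast
qed

lemma vertex_cycle_close_path:
  assumes path: "rtrancl_path (adj F) u xs v" and "distinct (u # xs)" "u \<noteq> v" "{u, v} \<notin> F"
  shows "vertex_cycle (u # xs)" "cycle_edges (u # xs) \<subseteq> insert {u, v} F"
    "{u, v} \<in> cycle_edges (u # xs)"
proof -
  define vs where "vs = u # xs"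
  have "xs \<noteq> []"
    using path assms(3) by (cases rule: rtrancl_path.cases) auto
  then have last: "vs ! (length vs - 1) = v"
    using rtrancl_path_last[OF path] unfolding vs_def by (simp add: last_conv_nth)
  have step: "{vs ! i, vs ! Suc i} \<in> F" if "Suc i < length vs" for i
    using rtrancl_path_nth[OF path, of i] that unfolding vs_def adj_def by simp
  have "3 \<le> length vs"
  proof (rule ccontr)
    assume "\<not> 3 \<le> length vs"
    moreover have "0 < length xs"
      using \<open>xs \<noteq> []\<close> by simp
    ultimately have "length vs = 2"
      unfolding vs_def length_Cons by linarith
    then show False
      using step[of 0] last assms(4) unfolding vs_def by simp
  qed
  then show "vertex_cycle (u # xs)"
    using assms(2) unfolding vs_def by unfold_locales
  then interpret vertex_cycle vs
    unfolding vs_def .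
  have closing: "cycle_edge vs (L - 1) = {u, v}"
    using long last unfolding cycle_edge_def vs_def by (simp add: insert_commute)
  have "cycle_edge vs i \<in> insert {u, v} F" if "i < L" for i
  proof (cases "Suc i < L")
    case True
    then show ?thesis using step[OF True] unfolding cycle_edge_def by simp
  next
    case False
    then have "i = L - 1"
      using that by simp
    then show ?thesis
      using closing by simp
  qed
  then show "cycle_edges (u # xs) \<subseteq> insert {u, v} F"
    unfolding cycle_edges_def vs_def by blast
  have "L - 1 < L"
    using long by simp
  then show "{u, v} \<in> cycle_edges (u # xs)"
    unfolding vs_def[symmetric] cycle_edges_def closing[symmetric] by blast
qed

lemma cycle_through_edge_if_reach:
  assumes "{u, v} \<in> E" "u \<noteq> v" and "reach (E - {{u, v}}) u v"
  obtains C where "is_cycle E C" "{u, v} \<in> C"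
proof -
  obtain xs where path: "rtrancl_path (adj (E - {{u, v}})) u xs v" and "distinct (u # xs)"
    using assms(3) rtrancl_path_distinct unfolding rtranclp_eq_rtrancl_path by metis
  note closed = vertex_cycle_close_path[OF this assms(2)]
  have "cycle_edges (u # xs) \<subseteq> E"
    using closed(2) assms(1) by blast
  then have "is_cycle E (cycle_edges (u # xs))"
    unfolding is_cycle_iff using closed(1) unfolding vertex_cycle_def by blast
  then show ?thesis
    using that closed(3) by blast
qed

section \<open>Bridges\<close>

text \<open>For a simple connected graph these are exactly the edges whose removal disconnects it.\<close>
definition bridges :: "'a set set \<Rightarrow> 'a set set" where
  "bridges E = {e \<in> E. \<nexists>C. is_cycle E C \<and> e \<in> C}"

definition edge_disjoint_cycles :: "'a set set \<Rightarrow> bool" where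
  "edge_disjoint_cycles E \<longleftrightarrow>
     (\<forall>e\<in>E. \<forall>C1 C2. is_cycle E C1 \<and> is_cycle E C2 \<and> e \<in> C1 \<and> e \<in> C2 \<longrightarrow> C1 = C2)"

lemma cactus_iff: "cactus V E \<longleftrightarrow> simple_graph V E \<and> connected_graph V E \<and> edge_disjoint_cycles E"
  unfolding cactus_def edge_disjoint_cycles_def ..

lemma edge_disjoint_cyclesD:
  "edge_disjoint_cycles E \<Longrightarrow> is_cycle E C1 \<Longrightarrow> is_cycle E C2 \<Longrightarrow> e \<in> C1 \<Longrightarrow> e \<in> C2 \<Longrightarrow> C1 = C2"
  unfolding edge_disjoint_cycles_def by (meson is_cycle_subset subsetD)

lemma edge_disjoint_cycles_subset:
  "edge_disjoint_cycles F \<Longrightarrow> E \<subseteq> F \<Longrightarrow> edge_disjoint_cycles E"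
  unfolding edge_disjoint_cycles_def by (meson is_cycle_mono subsetD)

lemma reach_Diff_cycle_edge:
  assumes C: "is_cycle E C" "e \<in> C" and "reach E u w"
  shows "reach (E - {e}) u w"
proof -
  obtain x y where xy: "e = {x, y}" "reach (C - {e}) x y"
    using C by (rule cycle_edge_endpoints_reach)
  have "reach (E - {e}) x y"
    using xy(2) by (rule reach_mono) (use is_cycle_subset[OF C(1)] in blast)
  have adj_reach: "reach (E - {e}) p q" if "adj E p q" for p q
  proof (cases "{p, q} = e")
    case True
    then consider "p = x" "q = y" | "p = y" "q = x"
      using xy(1) by (auto simp: doubleton_eq_iff)
    then show ?thesis
    proof cases
      case 1
      then show ?thesis using \<open>reach (E - {e}) x y\<close> by simp
    next
      case 2
      then show ?thesis using reach_sym[OF \<open>reach (E - {e}) x y\<close>] by simp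
    qed
  next
    case False
    then have "adj (E - {e}) p q"
      using that unfolding adj_def by simp
    then show ?thesis by (rule r_into_rtranclp)
  qed
  show ?thesis
    using assms(3)
  proof (induction rule: rtranclp_induct)
    case (step q r)
    from step.IH adj_reach[OF step.hyps(2)] show ?case
      by (rule rtranclp_trans)
  qed simp
qed

lemma bridgeless_if_no_bridges:
  assumes "connected_graph V E" "bridges E = {}"
  shows "bridgeless V E"
  unfolding bridgeless_def
proof
  fix e assume "e \<in> E"
  then obtain C where C: "is_cycle E C" "e \<in> C"
    using assms(2) unfolding bridges_def by blast
  show "connected_graph V (E - {e})"
    unfolding connected_graph_def
  proof (intro ballI)
    fix u w assume "u \<in> V" "w \<in> V"
    then have "reach E u w"
      using assms(1) unfolding connected_graph_def by blast
    then show "reach (E - {e}) u w"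
      by (rule reach_Diff_cycle_edge[OF C])
  qed
qed

lemma no_bridges_if_bridgeless:
  assumes "simple_graph V E" "bridgeless V E"
  shows "bridges E = {}"
proof -
  have "\<exists>C. is_cycle E C \<and> e \<in> C" if "e \<in> E" for e
  proof -
    have "card e = 2"
      using assms(1) that unfolding simple_graph_def by blast
    then obtain u v where uv: "e = {u, v}" "u \<noteq> v"
      by (meson card_2_iff)
    have "u \<in> V" "v \<in> V"
      using assms(1) that uv(1) unfolding simple_graph_def by auto
    moreover have "connected_graph V (E - {e})"
      using assms(2) that unfolding bridgeless_def by blast
    ultimately have "reach (E - {{u, v}}) u v"
      unfolding connected_graph_def uv(1) by blast
    moreover have "{u, v} \<in> E"
      using that uv(1) by simp
    ultimately show ?thesis
      using cycle_through_edge_if_reach[OF _ uv(2)] uv(1) by metis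
  qed
  then show ?thesis
    unfolding bridges_def by blast
qed

lemma bridges_Int_cycle: "is_cycle E C \<Longrightarrow> bridges E \<inter> C = {}"
  unfolding bridges_def by blast

lemma is_cycle_insert_not_mem:
  assumes "is_cycle (insert e E) D" "e \<notin> D"
  shows "is_cycle E D"
proof -
  have "D \<subseteq> E"
    using is_cycle_subset[OF assms(1)] assms(2) by blast
  with assms(1) show ?thesis
    by (rule is_cycle_transfer)
qed

lemma bridges_insert_off_cycles:
  assumes "\<nexists>C. is_cycle (insert e E) C \<and> e \<in> C"
  shows "bridges (insert e E) = insert e (bridges E)"
proof -
  have "is_cycle (insert e E) C \<longleftrightarrow> is_cycle E C" for C
    using assms is_cycle_insert_not_mem is_cycle_mono[of E C "insert e E"] by blast
  then show ?thesis
    using assms unfolding bridges_def by auto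
qed

lemma bridges_insert_on_cycle:
  assumes "e \<notin> E" "edge_disjoint_cycles (insert e E)" and C: "is_cycle (insert e E) C" "e \<in> C"
  shows "bridges E = bridges (insert e E) \<union> (C - {e})"
proof -
  have C_only: "D = C" if "is_cycle (insert e E) D" "f \<in> D" "f \<in> C" for D f
    using edge_disjoint_cyclesD[OF assms(2) that(1) C(1) that(2,3)] .
  have "f \<in> bridges (insert e E) \<union> (C - {e})" if f: "f \<in> bridges E" for f
  proof (cases "f \<in> C")
    case True
    then show ?thesis
      using f assms(1) unfolding bridges_def by auto
  next
    case False
    then have "e \<notin> D" if "is_cycle (insert e E) D" "f \<in> D" for D
      using C_only[OF that(1) _ C(2)] that(2) False by blast
    then show ?thesis
      using f is_cycle_insert_not_mem unfolding bridges_def by blast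
  qed
  moreover have "f \<in> bridges E" if f: "f \<in> bridges (insert e E)" for f
  proof -
    have "f \<noteq> e"
      using f C unfolding bridges_def by blast
    then show ?thesis
      using f is_cycle_mono[of E _ "insert e E"] unfolding bridges_def by blast
  qed
  moreover have "f \<in> bridges E" if f: "f \<in> C - {e}" for f
  proof -
    have "\<not> is_cycle E D" if "f \<in> D" for D
    proof
      assume D: "is_cycle E D"
      then have "D = C"
        using C_only[OF _ that] is_cycle_mono[OF D] f by blast
      then show False
        using is_cycle_subset[OF D] C(2) assms(1) by blast
    qed
    then show ?thesis
      using f is_cycle_subset[OF C(1)] unfolding bridges_def by blast
  qed
  ultimately show ?thesis
    by blast
qed

lemma num_components_insert_bridge:
  assumes "finite V" "e \<subseteq> V" "card e = 2" "e \<notin> E" "\<nexists>C. is_cycle (insert e E) C \<and> e \<in> C"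
  shows "num_components V (insert e E) < num_components V E"
proof -
  obtain u v where uv: "e = {u, v}" "u \<noteq> v" "u \<in> V" "v \<in> V"
    using assms(2,3) by (metis card_2_iff insert_subset)
  have "\<not> reach E u v"
  proof
    assume "reach E u v"
    then have reach: "reach (insert e E - {{u, v}}) u v"
      using assms(4) uv(1) by simp
    have "{u, v} \<in> insert e E"
      using uv(1) by simp
    then obtain C where "is_cycle (insert e E) C" "{u, v} \<in> C"
      using uv(2) reach by (rule cycle_through_edge_if_reach)
    then show False
      using assms(5) uv(1) by blast
  qed
  moreover have "reach (insert e E) u v"
    using uv(1) unfolding adj_def by (intro r_into_rtranclp) simp
  ultimately show ?thesis
    using num_components_strict_antimono[OF assms(1) _ uv(3,4)] by blast
qed

section \<open>Counting edges of graphs with edge-disjoint cycles\<close>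

lemma even_degree_add_degree_bridges:
  assumes "finite E" "edge_disjoint_cycles E"
  shows "even (degree E w + degree (bridges E) w)"
  using assms
proof (induction rule: finite_induct)
  case empty
  then show ?case
    unfolding degree_def bridges_def by simp
next
  case (insert e E)
  have IH: "even (degree E w + degree (bridges E) w)"
    using insert.IH insert.prems edge_disjoint_cycles_subset by blast
  have finite_bridges: "finite (bridges E)"
    using insert.hyps(1) unfolding bridges_def by simp
  have degree: "degree (insert e E) w = degree E w + (if w \<in> e then 1 else 0)"
    using degree_insert[OF insert.hyps] .
  show ?case
  proof (cases "\<exists>C. is_cycle (insert e E) C \<and> e \<in> C")
    case False
    have "e \<notin> bridges E"
      using insert.hyps(2) unfolding bridges_def by blast
    then have "degree (bridges (insert e E)) w = degree (bridges E) w + (if w \<in> e then 1 else 0)"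
      using bridges_insert_off_cycles[OF False] degree_insert[OF finite_bridges] by simp
    then show ?thesis
      using IH degree by simp
  next
    case True
    then obtain C where C: "is_cycle (insert e E) C" "e \<in> C"
      by blast
    have "finite C"
      by (rule is_cycle_card(1)[OF C(1)])
    have "degree (bridges E) w = degree (bridges (insert e E)) w + degree (C - {e}) w"
      unfolding bridges_insert_on_cycle[OF insert.hyps(2) insert.prems C]
      using \<open>finite C\<close> finite_bridges bridges_insert_on_cycle[OF insert.hyps(2) insert.prems C]
        bridges_Int_cycle[OF C(1)]
      by (intro degree_Un) auto
    moreover have "degree C w = degree (C - {e}) w + (if w \<in> e then 1 else 0)"
      using degree_insert[of "C - {e}" e w] \<open>finite C\<close> C(2) by (simp add: insert_absorb)
    moreover have "even (degree C w)"
      using degree_cycle[OF C(1)] by simp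
    ultimately show ?thesis
      using IH degree by (cases "w \<in> e") (simp_all add: even_add)
  qed
qed

lemma card_edges_bridges_components_bound:
  assumes "simple_graph V E" "edge_disjoint_cycles E"
  shows "2 * card E + card (bridges E) + 3 * num_components V E \<le> 3 * card V"
proof -
  have "finite V"
    using assms(1) unfolding simple_graph_def by simp
  from simple_graph_finite_edges[OF assms(1)] assms show ?thesis
  proof (induction rule: finite_induct)
    case empty
    then show ?case
      using num_components_le_card[OF \<open>finite V\<close>] unfolding bridges_def by simp
  next
    case (insert e E)
    have "simple_graph V E"
      using insert.prems(1) unfolding simple_graph_def by blast
    then have IH: "2 * card E + card (bridges E) + 3 * num_components V E \<le> 3 * card V"
      using insert.IH insert.prems(2) edge_disjoint_cycles_subset by blast
    have finite_bridges: "finite (bridges E)"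
      using insert.hyps(1) unfolding bridges_def by simp
    show ?case
    proof (cases "\<exists>C. is_cycle (insert e E) C \<and> e \<in> C")
      case False
      have "e \<notin> bridges E"
        using insert.hyps(2) unfolding bridges_def by blast
      then have "card (bridges (insert e E)) = card (bridges E) + 1"
        using bridges_insert_off_cycles[OF False] finite_bridges by simp
      moreover have "num_components V (insert e E) < num_components V E"
        using insert.prems(1) insert.hyps(2) False unfolding simple_graph_def
        by (intro num_components_insert_bridge[OF \<open>finite V\<close>]) auto
      ultimately show ?thesis
        using IH insert.hyps by simp
    next
      case True
      then obtain C where C: "is_cycle (insert e E) C" "e \<in> C"
        by blast
      have "card (bridges E) = card (bridges (insert e E)) + (card C - 1)"
        unfolding bridges_insert_on_cycle[OF insert.hyps(2) insert.prems(2) C]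
        using finite_bridges is_cycle_card(1)[OF C(1)] C(2) bridges_Int_cycle[OF C(1)]
          bridges_insert_on_cycle[OF insert.hyps(2) insert.prems(2) C]
        by (subst card_Un_disjoint) auto
      moreover have "3 \<le> card C"
        by (rule is_cycle_card(2)[OF C(1)])
      moreover have "num_components V (insert e E) \<le> num_components V E"
        using num_components_antimono[OF \<open>finite V\<close>] by blast
      ultimately show ?thesis
        using IH insert.hyps by simp
    qed
  qed
qed

lemma bridgeless_cactus_bounds:
  assumes "cactus V E" "bridgeless V E" "V \<noteq> {}"
  shows "2 * card E + 3 \<le> 3 * card V" "even (degree E w)"
proof -
  have simple: "simple_graph V E" and connected: "connected_graph V E"
    and disjoint: "edge_disjoint_cycles E"
    using assms(1) unfolding cactus_iff by simp_all
  have "bridges E = {}"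
    using simple assms(2) by (rule no_bridges_if_bridgeless)
  moreover have "num_components V E = 1"
    by (rule num_components_connected[OF assms(3) connected])
  moreover have "2 * card E + card (bridges E) + 3 * num_components V E \<le> 3 * card V"
    by (rule card_edges_bridges_components_bound[OF simple disjoint])
  ultimately show "2 * card E + 3 \<le> 3 * card V"
    by simp
  show "even (degree E w)"
    using even_degree_add_degree_bridges[OF simple_graph_finite_edges[OF simple] disjoint, of w]
      \<open>bridges E = {}\<close> unfolding degree_def by simp
qed

section \<open>Building bridgeless cacti\<close>

context vertex_cycle
begin

lemma is_cycle_cycle_edges: "is_cycle (cycle_edges vs) (cycle_edges vs)"
  unfolding is_cycle_iff using distinct long by blast

lemma cactus_cycle_edges: "cactus (set vs) (cycle_edges vs)"
  unfolding cactus_iff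
proof (intro conjI)
  show "simple_graph (set vs) (cycle_edges vs)"
    unfolding simple_graph_def cycle_edges_def
    using cycle_edges_subset card_cycle_edge unfolding cycle_edges_def by auto
  show "connected_graph (set vs) (cycle_edges vs)"
    by (rule connected_cycle_edges)
  show "edge_disjoint_cycles (cycle_edges vs)"
    unfolding edge_disjoint_cycles_def
    using cycle_subset_cycle_eq is_cycle_cycle_edges is_cycle_subset by metis
qed

lemma bridges_cycle_edges: "bridges (cycle_edges vs) = {}"
  unfolding bridges_def using is_cycle_cycle_edges by blast

end

lemma cycle_edges_triangle:
  "cycle_edges [h, a, b] = {{h, a}, {a, b}, {b, h}}"
  unfolding cycle_edges_def cycle_edge_def by (auto simp: lessThan_Suc)

text \<open>As \<open>a\<close> and \<open>b\<close> have degree 2, a cycle through one of them contains the whole triangle.\<close>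
lemma cycles_glue_triangle:
  assumes "finite E" "a \<notin> \<Union>E" "b \<notin> \<Union>E" "distinct [h, a, b]"
    and D: "is_cycle (E \<union> cycle_edges [h, a, b]) D"
  shows "D = cycle_edges [h, a, b] \<or> is_cycle E D"
proof (cases "\<exists>x\<in>D. a \<in> x \<or> b \<in> x")
  case True
  let ?T = "cycle_edges [h, a, b]"
  have "vertex_cycle [h, a, b]"
    using assms(4) by unfold_locales simp_all
  then have T: "is_cycle (E \<union> ?T) ?T"
    using vertex_cycle.is_cycle_cycle_edges is_cycle_mono by blast
  have finite: "finite (E \<union> ?T)"
    using assms(1) by (simp add: cycle_edges_def)
  have at_a: "{x \<in> E \<union> ?T. a \<in> x} = {{h, a}, {a, b}}"
    and at_b: "{x \<in> E \<union> ?T. b \<in> x} = {{a, b}, {b, h}}"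
    using assms(2-4) unfolding cycle_edges_triangle by auto
  then have "degree (E \<union> ?T) a \<le> 2" "degree (E \<union> ?T) b \<le> 2"
    unfolding degree_def by (simp_all add: card_insert_le_m1)
  have D_at_a: "{x \<in> D. a \<in> x} = {{h, a}, {a, b}}" if "a \<in> x" "x \<in> D" for x
    using incident_edges_cycle_eq[OF D that finite \<open>degree _ a \<le> 2\<close>] at_a by simp
  have D_at_b: "{x \<in> D. b \<in> x} = {{a, b}, {b, h}}" if "b \<in> x" "x \<in> D" for x
    using incident_edges_cycle_eq[OF D that finite \<open>degree _ b \<le> 2\<close>] at_b by simp
  have "{a, b} \<in> D"
    using True D_at_a D_at_b by blast
  then have "?T \<subseteq> D"
    using D_at_a[of "{a, b}"] D_at_b[of "{a, b}"] unfolding cycle_edges_triangle by blast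
  then show ?thesis
    using cycle_subset_cycle_eq[OF T D] by simp
next
  case False
  then have "D \<subseteq> E"
    using is_cycle_subset[OF D] unfolding cycle_edges_triangle by blast
  then show ?thesis
    using D is_cycle_transfer by blast
qed

locale triangle_glue =
  fixes V :: "'a set" and E :: "'a set set" and h a b :: 'a
  assumes cactus: "cactus V E" and no_bridges: "bridges E = {}"
    and h: "h \<in> V" and a: "a \<notin> V" and b: "b \<notin> V" and a_neq_b: "a \<noteq> b"
begin

abbreviation "T \<equiv> cycle_edges [h, a, b]"

lemma simple: "simple_graph V E"
  using cactus unfolding cactus_iff by simp

lemma distinct: "distinct [h, a, b]"
  using h a b a_neq_b by auto

lemma finite: "finite E" "finite T"
  using simple_graph_finite_edges[OF simple] by (simp_all add: cycle_edges_def)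

lemma not_in_edges: "a \<notin> \<Union>E" "b \<notin> \<Union>E"
  using simple a b unfolding simple_graph_def by blast+

lemma disjoint: "E \<inter> T = {}"
  using not_in_edges unfolding cycle_edges_triangle by blast

lemma is_cycle_T: "is_cycle (E \<union> T) T"
proof -
  interpret vertex_cycle "[h, a, b]"
    using distinct by unfold_locales simp_all
  show ?thesis
    using is_cycle_cycle_edges is_cycle_mono by blast
qed

lemma degree_glued: "degree (E \<union> T) w = degree E w + (if w \<in> {h, a, b} then 2 else 0)"
proof -
  interpret vertex_cycle "[h, a, b]"
    using distinct by unfold_locales simp_all
  show ?thesis
    unfolding degree_Un[OF finite disjoint] degree_cycle_edges by simp
qed

lemma simple_glued: "simple_graph (insert a (insert b V)) (E \<union> T)"
proof -
  have "e \<subseteq> insert a (insert b V) \<and> card e = 2" if "e \<in> T" for e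
    using that distinct h unfolding cycle_edges_triangle by auto
  then show ?thesis
    using simple unfolding simple_graph_def by blast
qed

lemma connected_glued: "connected_graph (insert a (insert b V)) (E \<union> T)"
proof (rule connected_graphI)
  fix v assume "v \<in> insert a (insert b V)"
  then consider "v = a" | "v = b" | "v \<in> V"
    by blast
  then show "reach (E \<union> T) h v"
  proof cases
    case 1
    then have "adj (E \<union> T) h v"
      unfolding adj_def cycle_edges_triangle by simp
    then show ?thesis by (rule r_into_rtranclp)
  next
    case 2
    then have "adj (E \<union> T) h v"
      unfolding adj_def cycle_edges_triangle by (simp add: insert_commute)
    then show ?thesis by (rule r_into_rtranclp)
  next
    case 3
    then have "reach E h v"
      using cactus h unfolding cactus_iff connected_graph_def by blast
    then show ?thesis
      by (rule reach_mono) simp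
  qed
qed

lemma cycles_glued: "is_cycle (E \<union> T) D \<Longrightarrow> D = T \<or> is_cycle E D"
  using cycles_glue_triangle[OF finite(1) not_in_edges distinct] by blast

lemma edge_disjoint_cycles_glued: "edge_disjoint_cycles (E \<union> T)"
  unfolding edge_disjoint_cycles_def
proof (intro ballI allI impI)
  fix f C1 C2
  assume C12: "is_cycle (E \<union> T) C1 \<and> is_cycle (E \<union> T) C2 \<and> f \<in> C1 \<and> f \<in> C2"
  show "C1 = C2"
  proof (cases "f \<in> T")
    case True
    then have "\<not> is_cycle E C1" "\<not> is_cycle E C2"
      using C12 is_cycle_subset disjoint by blast+
    then show ?thesis
      using cycles_glued C12 by metis
  next
    case False
    then have "is_cycle E C1" "is_cycle E C2"
      using cycles_glued C12 by metis+
    then show ?thesis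
      using edge_disjoint_cyclesD cactus C12 unfolding cactus_iff by blast
  qed
qed

lemma cactus_glued: "cactus (insert a (insert b V)) (E \<union> T)"
  unfolding cactus_iff using simple_glued connected_glued edge_disjoint_cycles_glued by blast

lemma bridges_glued: "bridges (E \<union> T) = {}"
proof -
  have "\<exists>C. is_cycle (E \<union> T) C \<and> f \<in> C" if "f \<in> E \<union> T" for f
  proof (cases "f \<in> E")
    case True
    then obtain C where "is_cycle E C" "f \<in> C"
      using no_bridges unfolding bridges_def by blast
    then show ?thesis
      using is_cycle_mono[of E C "E \<union> T"] by blast
  next
    case False
    then show ?thesis
      using that is_cycle_T by blast
  qed
  then show ?thesis
    unfolding bridges_def by blast
qed

end

definition admissible_degrees :: "'a set \<Rightarrow> ('a \<Rightarrow> nat) \<Rightarrow> bool" where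
  "admissible_degrees V f \<longleftrightarrow>
     (\<forall>v\<in>V. even (f v) \<and> 2 \<le> f v) \<and> (\<Sum>v\<in>V. f v) \<le> 3 * (card V - 1)"

lemma exists_bridgeless_cactus_2_regular:
  assumes "finite V" "3 \<le> card V"
  shows "\<exists>E. cactus V E \<and> bridges E = {} \<and> (\<forall>v\<in>V. degree E v = 2)"
proof -
  obtain vs where vs: "set vs = V" "distinct vs"
    using finite_distinct_list[OF assms(1)] by blast
  moreover have "length vs = card V"
    using vs distinct_card by fastforce
  ultimately interpret vertex_cycle vs
    using assms(2) by unfold_locales simp_all
  show ?thesis
    using cactus_cycle_edges bridges_cycle_edges degree_cycle_edges vs(1) by auto
qed

text \<open>With \<open>A\<close> the vertices of degree 2 and \<open>B\<close> the others,
  \<open>2 |A| + 4 |B| \<le> 3 (|A| + |B|) - 3\<close> forces \<open>|A| \<ge> |B| + 3 \<ge> 4\<close>.\<close>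
lemma two_vertices_of_degree_two:
  assumes "finite V" "admissible_degrees V f" "h \<in> V" "f h \<noteq> 2"
  obtains a b where "a \<in> V" "b \<in> V" "a \<noteq> b" "f a = 2" "f b = 2" "5 \<le> card V"
proof -
  let ?A = "{v \<in> V. f v = 2}" and ?B = "{v \<in> V. f v \<noteq> 2}"
  have "V = ?A \<union> ?B" "?A \<inter> ?B = {}"
    by auto
  then have card: "card V = card ?A + card ?B"
    and sum: "(\<Sum>v\<in>V. f v) = (\<Sum>v\<in>?A. f v) + (\<Sum>v\<in>?B. f v)"
    using assms(1) card_Un_disjoint[of ?A ?B] sum.union_disjoint[of ?A ?B f] by simp_all
  have "4 \<le> f v" if "v \<in> ?B" for v
    using assms(2) that unfolding admissible_degrees_def by fastforce
  then have "4 * card ?B \<le> (\<Sum>v\<in>?B. f v)"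
    using sum_mono[of ?B "\<lambda>_. 4" f] by simp
  moreover have "(\<Sum>v\<in>?A. f v) = 2 * card ?A"
    by simp
  moreover have "1 \<le> card ?B"
    using assms(1,3,4) by (auto simp: Suc_le_eq card_gt_0_iff)
  ultimately have "Suc 1 \<le> card ?A" "5 \<le> card V"
    using assms(2) card sum unfolding admissible_degrees_def by linarith+
  then obtain a A where aA: "?A = insert a A" "a \<notin> A" "1 \<le> card A"
    unfolding card_le_Suc_iff by blast
  then obtain b where "b \<in> A"
    by fastforce
  then show ?thesis
    using that aA \<open>5 \<le> card V\<close> by blast
qed

lemma admissible_degrees_remove_triangle:
  assumes "finite V" "admissible_degrees V f" "h \<in> V" "4 \<le> f h"
    and "a \<in> V" "b \<in> V" "a \<noteq> b" "f a = 2" "f b = 2"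
  shows "admissible_degrees (V - {a, b}) (\<lambda>v. f v - (if v = h then 2 else 0))"
proof -
  let ?V' = "V - {a, b}" and ?f' = "\<lambda>v. f v - (if v = h then 2 else 0)"
  have "h \<in> ?V'"
    using assms(3-9) by auto
  have degrees: "\<forall>v\<in>?V'. even (?f' v) \<and> 2 \<le> ?f' v"
    using assms(2,4) unfolding admissible_degrees_def by auto
  have "h \<noteq> a" "h \<noteq> b"
    using assms(4,8,9) by auto
  then have "3 \<le> card V"
    using card_mono[OF assms(1), of "{h, a, b}"] assms(3,5-7) by simp
  have "(\<Sum>v\<in>?V'. ?f' v) = (\<Sum>v\<in>?V'. f v) - 2"
    using assms(1,4) \<open>h \<in> ?V'\<close> by (subst sum_subtractf_nat) auto
  moreover have "(\<Sum>v\<in>V. f v) = (\<Sum>v\<in>?V'. f v) + 4"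
    using sum.subset_diff[of "{a, b}" V f] assms(1,5-9) by simp
  moreover have "card ?V' = card V - 2"
    using assms(1,5-7) by (simp add: card_Diff_subset)
  ultimately show ?thesis
    using degrees assms(2) \<open>3 \<le> card V\<close> unfolding admissible_degrees_def by auto
qed

lemma exists_bridgeless_cactus:
  assumes "finite V" "3 \<le> card V" "admissible_degrees V f"
  shows "\<exists>E. cactus V E \<and> bridges E = {} \<and> (\<forall>v\<in>V. degree E v = f v)"
  using assms
proof (induction "card V" arbitrary: V f rule: less_induct)
  case less
  note V = less.prems
  show ?case
  proof (cases "\<forall>v\<in>V. f v = 2")
    case True
    then show ?thesis
      using exists_bridgeless_cactus_2_regular[OF V(1,2)] by auto
  next
    case False
    then obtain h where h: "h \<in> V" "f h \<noteq> 2"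
      by blast
    then have "4 \<le> f h"
      using V(3) unfolding admissible_degrees_def by fastforce
    obtain a b where ab: "a \<in> V" "b \<in> V" "a \<noteq> b" "f a = 2" "f b = 2" "5 \<le> card V"
      using two_vertices_of_degree_two[OF V(1,3) h] by blast
    define V' where "V' = V - {a, b}"
    define f' where "f' v = f v - (if v = h then 2 else 0)" for v
    have "admissible_degrees V' f'"
      unfolding V'_def f'_def using V(1,3) h(1) \<open>4 \<le> f h\<close> ab(1-5)
      by (rule admissible_degrees_remove_triangle)
    moreover have "finite V'" "card V' < card V" "3 \<le> card V'"
      using V(1) ab unfolding V'_def by (simp_all add: card_Diff_subset)
    ultimately obtain E' where E': "cactus V' E'" "bridges E' = {}" "\<forall>v\<in>V'. degree E' v = f' v"
      using less.hyps by blast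
    have "h \<in> V'" "a \<notin> V'" "b \<notin> V'" and V: "V = insert a (insert b V')"
      using h ab unfolding V'_def by auto
    then interpret triangle_glue V' E' h a b
      using E'(1,2) ab(3) by unfold_locales
    have "degree E' a = 0" "degree E' b = 0"
      using simple \<open>a \<notin> V'\<close> \<open>b \<notin> V'\<close> by (simp_all add: degree_outside)
    then have "degree (E' \<union> T) v = f v" if "v \<in> V" for v
      using that degree_glued[of v] E'(3) ab(4,5) \<open>4 \<le> f h\<close> V unfolding f'_def by auto
    then show ?thesis
      using cactus_glued bridges_glued unfolding V by blast
  qed
qed

lemma le_floor_three_halves_iff:
  "real m \<le> real_of_int \<lfloor>(3/2) * (real n - 1)\<rfloor> \<longleftrightarrow> 2 * m + 3 \<le> 3 * n"
proof -
  have "real m \<le> real_of_int \<lfloor>(3/2) * (real n - 1)\<rfloor> \<longleftrightarrow> real m \<le> (3/2) * (real n - 1)"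
    by (metis le_floor_iff of_int_le_iff of_int_of_nat_eq)
  also have "\<dots> \<longleftrightarrow> real (2 * m + 3) \<le> real (3 * n)"
    by (auto simp: field_simps)
  finally show ?thesis
    by (simp only: of_nat_le_iff)
qed

lemma admissible_degrees_if_bound:
  assumes "degree_sequence n d" "2 * ((\<Sum>i=1..n. d i) div 2) + 3 \<le> 3 * n"
    and even: "\<forall>i\<in>{1..n}. even (d i)"
  shows "admissible_degrees {1..n} d"
proof -
  have "even (\<Sum>i=1..n. d i)" and pos: "\<forall>i\<in>{1..n}. 1 \<le> d i"
    using assms(1) unfolding degree_sequence_def by simp_all
  then have "(\<Sum>i=1..n. d i) \<le> 3 * (card {1..n} - 1)"
    using assms(2) by simp
  moreover have "even (d i) \<and> 2 \<le> d i" if "i \<in> {1..n}" for i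
  proof -
    have "even (d i)" "1 \<le> d i"
      using that even pos by blast+
    then show ?thesis by presburger
  qed
  ultimately show ?thesis
    unfolding admissible_degrees_def by blast
qed

theorem theorem5p2:
  fixes n :: nat and d :: "nat \<Rightarrow> nat"
  assumes "degree_sequence n d" and "n \<ge> 3"
  shows "(\<exists>E. realization n d E \<and> cactus {1..n} E \<and> bridgeless {1..n} E) \<longleftrightarrow>
         (real ((\<Sum>i=1..n. d i) div 2) \<le> real_of_int \<lfloor>(3/2) * (real n - 1)\<rfloor> \<and>
          (\<forall>i\<in>{1..n}. even (d i)))"
  unfolding le_floor_three_halves_iff
proof
  assume "\<exists>E. realization n d E \<and> cactus {1..n} E \<and> bridgeless {1..n} E"
  then obtain E where E: "simple_graph {1..n} E" "\<forall>i\<in>{1..n}. degree E i = d i"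
    "cactus {1..n} E" "bridgeless {1..n} E"
    unfolding realization_def by blast
  have "{1..n} \<noteq> {}"
    using assms(2) by simp
  note bounds = bridgeless_cactus_bounds[OF E(3,4) this]
  have "(\<Sum>i=1..n. d i) div 2 = card E"
    using sum_degree[OF E(1)] E(2) by simp
  moreover have "2 * card E + 3 \<le> 3 * n"
    using bounds(1) by simp
  moreover have "even (d i)" if "i \<in> {1..n}" for i
    using bounds(2)[of i] E(2) that by simp
  ultimately show "2 * ((\<Sum>i=1..n. d i) div 2) + 3 \<le> 3 * n \<and> (\<forall>i\<in>{1..n}. even (d i))"
    by simp
next
  assume "2 * ((\<Sum>i=1..n. d i) div 2) + 3 \<le> 3 * n \<and> (\<forall>i\<in>{1..n}. even (d i))"
  then have "admissible_degrees {1..n} d"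
    using assms(1) admissible_degrees_if_bound by blast
  then obtain E where E: "cactus {1..n} E" "bridges E = {}" "\<forall>i\<in>{1..n}. degree E i = d i"
    using exists_bridgeless_cactus[of "{1..n}" d] assms(2) by auto
  then have "bridgeless {1..n} E"
    using bridgeless_if_no_bridges unfolding cactus_iff by blast
  then show "\<exists>E. realization n d E \<and> cactus {1..n} E \<and> bridgeless {1..n} E"
    using E unfolding realization_def cactus_iff by blast
qed

end
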